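(* Let $v$ satisfy the standing assumptions and the doubling condition. Let $f(z)=\sum_k a_{n_k}z^{n_k}$ be a holomorphic function in $\mathbb{D}$ given by a Hadamard gap series ($n_k$ positive integers, $n_{k+1}\ge\lambda n_k$, $\lambda>1$). If $\operatorname{Re}f\in k^\infty_v$, then $\operatorname{Re}f\in h^\infty_v$ and $\operatorname{Im}f\in h^\infty_v$.
   Context: Standing assumptions: $v:[0,1)\to[1,\infty)$ is positive, increasing, continuous, $v(0)=1$, $\lim_{r\to1}v(r)=+\infty$. Doubling condition: there is $D\ge1$ with $v(1-d)\le D\,v(1-2d)$ for all $d\in(0,1/2]$. $k^\infty_v$ is the set of real harmonic $u$ on $\mathbb{D}$ with $u(z)\le Kv(|z|)$ for some $K>0$; $h^\infty_v$ is the set of real harmonic $u$ on $\mathbb{D}$ with $|u(z)|\le Kv(|z|)$ for some $K>0$. *)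

theory Defs
  imports "HOL-Analysis.Analysis"
begin

definition harmonic_on :: "complex set \<Rightarrow> (complex \<Rightarrow> real) \<Rightarrow> bool" where
  "harmonic_on S u \<longleftrightarrow>
     (\<exists>ux uy uxx uyy.
        continuous_on S u \<and> continuous_on S ux \<and> continuous_on S uy \<and>
        continuous_on S uxx \<and> continuous_on S uyy \<and>
        (\<forall>z\<in>S. ((\<lambda>t. u (z + complex_of_real t)) has_real_derivative ux z) (at 0)) \<and>
        (\<forall>z\<in>S. ((\<lambda>t. u (z + \<i> * complex_of_real t)) has_real_derivative uy z) (at 0)) \<and>
        (\<forall>z\<in>S. ((\<lambda>t. ux (z + complex_of_real t)) has_real_derivative uxx z) (at 0)) \<and>
        (\<forall>z\<in>S. ((\<lambda>t. uy (z + \<i> * complex_of_real t)) has_real_derivative uyy z) (at 0)) \<and>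
        (\<forall>z\<in>S. uxx z + uyy z = 0))"

text \<open>Standing assumptions on the weight v.\<close>
definition weight :: "(real \<Rightarrow> real) \<Rightarrow> bool" where
  "weight v \<longleftrightarrow>
     (\<forall>r\<in>{0..<1}. v r \<ge> 1) \<and>
     mono_on {0..<1} v \<and>
     continuous_on {0..<1} v \<and>
     v 0 = 1 \<and>
     filterlim v at_top (at_left 1)"

definition doubling :: "(real \<Rightarrow> real) \<Rightarrow> bool" where
  "doubling v \<longleftrightarrow> (\<exists>D\<ge>1. \<forall>d\<in>{0<..1/2}. v (1 - d) \<le> D * v (1 - 2 * d))"

definition k_inf :: "(real \<Rightarrow> real) \<Rightarrow> (complex \<Rightarrow> real) set" where
  "k_inf v = {u. harmonic_on (ball 0 1) u \<and>
                 (\<exists>K>0. \<forall>z\<in>ball 0 1. u z \<le> K * v (norm z))}"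

definition h_inf :: "(real \<Rightarrow> real) \<Rightarrow> (complex \<Rightarrow> real) set" where
  "h_inf v = {u. harmonic_on (ball 0 1) u \<and>
                 (\<exists>K>0. \<forall>z\<in>ball 0 1. \<bar>u z\<bar> \<le> K * v (norm z))}"

end

theory Submission
  imports Defs "HOL-Complex_Analysis.Cauchy_Integral_Formula"
begin

(* If a Hadamard gap series f has Re f <= K v(|z|), then |f| <= C K v(|z|).
   On |z| = rho write f(z e^{it}) = sum_k c_k e^{i n_k t}.  Sidon's argument: if the
   frequencies of a finite index set J are well separated (riesz_gap), the Riesz product
   R(t) = prod_{k in J} (1 + Re (u_k e^{i n_k t})) with |u_k| <= 1 is nonnegative, has mean 1
   and Fourier coefficient conj(u_k)/2 at n_k for k in J, 0 for k outside J.  Testing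
   Re f <= h(rho) against R with u_k = sgn c_k gives sum_{k in J} |c_k| <= 2 h(rho).  Means
   are discrete averages over N-th roots of unity (root_mean), exact on trigonometric
   polynomials of degree < N.  A lacunary sequence splits into m residue classes of indices,
   each separated enough for this argument, so |f(z)| <= 2 m h(|z|). *)

lemma directional_derivative:
  fixes g :: "complex \<Rightarrow> complex"
  assumes "(g has_field_derivative g') (at z)"
  shows "((\<lambda>t. Re (g (z + c * complex_of_real t))) has_real_derivative Re (c * g')) (at 0)"
proof -
  have "((\<lambda>t. z + c * complex_of_real t) has_vector_derivative c) (at 0)"
    by (auto intro!: derivative_eq_intros simp: has_vector_derivative_def scaleR_conv_of_real)
  then have "((g \<circ> (\<lambda>t. z + c * complex_of_real t)) has_vector_derivative (c * g')) (at 0)"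
    by (rule field_vector_diff_chain_at) (use assms in simp)
  from has_field_derivative_Re[OF this] show ?thesis by (simp add: o_def)
qed

(* The real part of a holomorphic function is harmonic: its second partials are Re g'' and
   Re (i (i g'')) = - Re g''. *)
lemma harmonic_on_Re_holomorphic:
  fixes g :: "complex \<Rightarrow> complex"
  assumes hol: "g holomorphic_on S" and S: "open S"
  shows "harmonic_on S (\<lambda>z. Re (g z))"
proof -
  define g1 where "g1 = deriv g"
  define g2 where "g2 = deriv g1"
  have hol1: "g1 holomorphic_on S" unfolding g1_def using hol S by (rule holomorphic_deriv)
  have hol2: "g2 holomorphic_on S" unfolding g2_def using hol1 S by (rule holomorphic_deriv)
  have d0: "(g has_field_derivative g1 z) (at z)" if "z \<in> S" for z
    unfolding g1_def using hol S that by (intro holomorphic_derivI)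
  have d1: "(g1 has_field_derivative g2 z) (at z)" if "z \<in> S" for z
    unfolding g2_def using hol1 S that by (intro holomorphic_derivI)
  have c0: "continuous_on S g" and c1: "continuous_on S g1" and c2: "continuous_on S g2"
    using hol hol1 hol2 by (auto intro: holomorphic_on_imp_continuous_on)
  show ?thesis
    unfolding harmonic_on_def
  proof (intro exI conjI ballI)
    show "continuous_on S (\<lambda>z. Re (g z))" "continuous_on S (\<lambda>z. Re (g1 z))"
      "continuous_on S (\<lambda>z. Re (\<i> * g1 z))" "continuous_on S (\<lambda>z. Re (g2 z))"
      "continuous_on S (\<lambda>z. Re (\<i> * (\<i> * g2 z)))"
      using c0 c1 c2 by (auto intro!: continuous_intros)
    fix z assume z: "z \<in> S"
    show "((\<lambda>t. Re (g (z + complex_of_real t))) has_real_derivative Re (g1 z)) (at 0)"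
      using directional_derivative[OF d0[OF z], of 1] by simp
    show "((\<lambda>t. Re (g (z + \<i> * complex_of_real t))) has_real_derivative Re (\<i> * g1 z)) (at 0)"
      using directional_derivative[OF d0[OF z], of \<i>] .
    show "((\<lambda>t. Re (g1 (z + complex_of_real t))) has_real_derivative Re (g2 z)) (at 0)"
      using directional_derivative[OF d1[OF z], of 1] by simp
    have "((\<lambda>w. \<i> * g1 w) has_field_derivative \<i> * g2 z) (at z)"
      using DERIV_cmult[OF d1[OF z]] .
    from directional_derivative[OF this, of \<i>]
    show "((\<lambda>t. Re (\<i> * g1 (z + \<i> * complex_of_real t))) has_real_derivative Re (\<i> * (\<i> * g2 z))) (at 0)" .
    show "Re (g2 z) + Re (\<i> * (\<i> * g2 z)) = 0" by simp
  qed
qed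

(* Im g = Re (-i g), so the imaginary part is harmonic as well. *)
lemma harmonic_on_Im_holomorphic:
  fixes g :: "complex \<Rightarrow> complex"
  assumes "g holomorphic_on S" "open S"
  shows "harmonic_on S (\<lambda>z. Im (g z))"
proof -
  have "(\<lambda>z. - \<i> * g z) holomorphic_on S" using assms(1) by (intro holomorphic_intros)
  from harmonic_on_Re_holomorphic[OF this assms(2)] show ?thesis by simp
qed

(* Average of h over the N equally spaced points 2 pi j / N, a discrete substitute for the
   mean over the circle. *)
definition root_mean :: "nat \<Rightarrow> (real \<Rightarrow> complex) \<Rightarrow> complex" where
  "root_mean N h = (\<Sum>j<N. h (2 * pi * real j / real N)) / of_nat N"

definition wave :: "int \<Rightarrow> real \<Rightarrow> complex" where
  "wave p t = cis (real_of_int p * t)"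

lemma root_mean_add: "root_mean N (\<lambda>t. f t + g t) = root_mean N f + root_mean N g"
  unfolding root_mean_def by (simp add: sum.distrib add_divide_distrib)

lemma root_mean_cmult: "root_mean N (\<lambda>t. c * f t) = c * root_mean N f"
  unfolding root_mean_def by (simp add: sum_distrib_left)

lemma root_mean_suminf:
  assumes "\<And>t. summable (\<lambda>k. F k t)"
  shows "root_mean N (\<lambda>t. \<Sum>k. F k t) = (\<Sum>k. root_mean N (F k))"
proof -
  have "(\<Sum>j<N. \<Sum>k. F k (2 * pi * real j / real N)) = (\<Sum>k. \<Sum>j<N. F k (2 * pi * real j / real N))"
    using assms by (intro suminf_sum[symmetric])
  moreover have "summable (\<lambda>k. \<Sum>j<N. F k (2 * pi * real j / real N))"
    using assms by (intro summable_sum)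
  ultimately show ?thesis
    unfolding root_mean_def by (simp add: suminf_divide)
qed

lemma root_mean_Re_le:
  assumes "\<And>t. 0 \<le> R t" "\<And>t. Re (h t) \<le> B"
  shows "Re (root_mean N (\<lambda>t. complex_of_real (R t) * h t)) \<le> B * Re (root_mean N (\<lambda>t. complex_of_real (R t)))"
proof -
  have "(\<Sum>j<N. R (2 * pi * real j / real N) * Re (h (2 * pi * real j / real N)))
      \<le> (\<Sum>j<N. B * R (2 * pi * real j / real N))"
    using assms by (intro sum_mono) (metis mult.commute mult_left_mono)
  then show ?thesis
    unfolding root_mean_def by (simp add: sum_distrib_left divide_right_mono flip: sum_divide_distrib)
qed

lemma root_mean_norm_le:
  assumes "\<And>t. 0 \<le> R t"
  shows "norm (root_mean N (\<lambda>t. complex_of_real (R t) * wave p t)) \<le> Re (root_mean N (\<lambda>t. complex_of_real (R t)))"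
proof -
  have "norm (\<Sum>j<N. complex_of_real (R (2 * pi * real j / real N)) * wave p (2 * pi * real j / real N))
      \<le> (\<Sum>j<N. norm (complex_of_real (R (2 * pi * real j / real N)) * wave p (2 * pi * real j / real N)))"
    by (rule norm_sum)
  also have "\<dots> = (\<Sum>j<N. R (2 * pi * real j / real N))"
    using assms by (simp add: norm_mult wave_def)
  finally show ?thesis
    by (simp add: root_mean_def norm_divide divide_right_mono)
qed

lemma root_mean_wave:
  assumes N: "0 < N" and p: "\<bar>p\<bar> < int N"
  shows "root_mean N (wave p) = (if p = 0 then 1 else 0)"
proof (cases "p = 0")
  case True
  then show ?thesis using N by (simp add: root_mean_def wave_def)
next
  case False
  define w where "w = cis (2 * pi * real_of_int p / real N)"
  have powers: "wave p (2 * pi * real j / real N) = w ^ j" for j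
    unfolding w_def wave_def Complex.DeMoivre by (simp add: field_simps)
  have "w \<noteq> 1"
  proof
    assume "w = 1"
    then obtain m :: int where "2 * pi * real_of_int p / real N = of_int (2 * m) * pi"
      by (auto simp: w_def cis_conv_exp exp_eq_1)
    then have "p = m * int N" using N
      by (simp add: field_simps) (metis of_int_eq_iff of_int_mult of_int_of_nat_eq)
    with False p show False
      by (cases "m = 0") (auto simp: abs_mult mult_le_cancel_right1 dest: not_le_imp_less)
  qed
  moreover have "w ^ N = 1"
    unfolding w_def Complex.DeMoivre using N
    by (simp add: field_simps) (metis Ints_of_int cis_multiple_2pi mult.assoc mult.commute)
  ultimately have "(\<Sum>j<N. w ^ j) = 0" using sum_gp_strict[of w N] by simp
  then show ?thesis using False by (simp add: root_mean_def powers)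
qed

definition riesz :: "(nat \<Rightarrow> complex) \<Rightarrow> (nat \<Rightarrow> nat) \<Rightarrow> nat set \<Rightarrow> real \<Rightarrow> real" where
  "riesz u n J t = (\<Prod>k\<in>J. 1 + Re (u k * cis (real (n k) * t)))"

(* Total frequency of J; the Riesz product over J is a trigonometric polynomial of this degree. *)
definition freq_sum :: "(nat \<Rightarrow> nat) \<Rightarrow> nat set \<Rightarrow> int" where
  "freq_sum n J = int (\<Sum>k\<in>J. n k)"

lemma freq_sum_nonneg: "0 \<le> freq_sum n J"
  unfolding freq_sum_def by (rule of_nat_0_le_iff)

lemma riesz_nonneg:
  assumes "\<And>k. norm (u k) \<le> 1"
  shows "0 \<le> riesz u n J t"
proof -
  have "0 \<le> 1 + Re (u k * cis (real (n k) * t))" for k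
    using abs_Re_le_cmod[of "u k * cis (real (n k) * t)"] assms[of k]
    by (simp add: norm_mult)
  then show ?thesis unfolding riesz_def by (simp add: prod_nonneg)
qed

(* Multiplying by one more factor 1 + Re w = 1 + (w + conj w)/2 shifts the spectrum by +-n_b. *)
lemma riesz_insert_wave:
  assumes "finite A" "b \<notin> A"
  shows "complex_of_real (riesz u n (insert b A) t) * wave p t =
     complex_of_real (riesz u n A t) * wave p t
     + (u b / 2) * (complex_of_real (riesz u n A t) * wave (p + int (n b)) t)
     + (cnj (u b) / 2) * (complex_of_real (riesz u n A t) * wave (p - int (n b)) t)"
proof -
  define w where "w = u b * cis (real (n b) * t)"
  have R: "riesz u n (insert b A) t = (1 + Re w) * riesz u n A t"
    using assms by (simp add: riesz_def w_def)
  have up: "w * wave p t = u b * wave (p + int (n b)) t"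
    by (simp add: w_def wave_def cis_mult distrib_right mult.assoc add.commute)
  have down: "cnj w * wave p t = cnj (u b) * wave (p - int (n b)) t"
    by (simp add: w_def wave_def cis_cnj cis_mult left_diff_distrib mult.assoc)
  have "complex_of_real (Re w) = (w + cnj w) / 2"
    by (simp add: complex_add_cnj)
  then show ?thesis
    unfolding R of_real_mult of_real_add
    by (simp add: algebra_simps add_divide_distrib flip: up down)
qed

lemma root_mean_riesz_insert:
  assumes "finite A" "b \<notin> A"
  shows "root_mean N (\<lambda>t. complex_of_real (riesz u n (insert b A) t) * wave p t) =
     root_mean N (\<lambda>t. complex_of_real (riesz u n A t) * wave p t)
     + (u b / 2) * root_mean N (\<lambda>t. complex_of_real (riesz u n A t) * wave (p + int (n b)) t)
     + (cnj (u b) / 2) * root_mean N (\<lambda>t. complex_of_real (riesz u n A t) * wave (p - int (n b)) t)"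
  unfolding riesz_insert_wave[OF assms] root_mean_add root_mean_cmult ..

lemma root_mean_riesz_high:
  assumes "finite J" "0 < N" "freq_sum n J < \<bar>p\<bar>" "\<bar>p\<bar> + freq_sum n J < int N"
  shows "root_mean N (\<lambda>t. complex_of_real (riesz u n J t) * wave p t) = 0"
  using assms(1,3,4)
proof (induction J arbitrary: p rule: finite_induct)
  case empty
  then show ?case using root_mean_wave[OF assms(2), of p] by (simp add: riesz_def freq_sum_def)
next
  case (insert b A)
  have "freq_sum n (insert b A) = freq_sum n A + int (n b)"
    using insert.hyps by (simp add: freq_sum_def)
  with insert.prems have "root_mean N (\<lambda>t. complex_of_real (riesz u n A t) * wave q t) = 0"
    if "q \<in> {p, p + int (n b), p - int (n b)}" for q
    using that by (intro insert.IH) auto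
  from this[of p] this[of "p + int (n b)"] this[of "p - int (n b)"] show ?case
    unfolding root_mean_riesz_insert[OF insert.hyps] by simp
qed

definition riesz_gap :: "(nat \<Rightarrow> nat) \<Rightarrow> nat set \<Rightarrow> bool" where
  "riesz_gap n J \<longleftrightarrow> (\<forall>m\<in>J. freq_sum n {k\<in>J. k < m} < int (n m) \<and>
      (\<forall>j. j \<noteq> m \<longrightarrow> freq_sum n {k\<in>J. k < m} < \<bar>int (n m) - int (n j)\<bar>))"

lemma riesz_gapD:
  assumes "riesz_gap n J" "m \<in> J"
  shows "freq_sum n {k\<in>J. k < m} < int (n m)"
    "\<And>j. j \<noteq> m \<Longrightarrow> freq_sum n {k\<in>J. k < m} < \<bar>int (n m) - int (n j)\<bar>"
proof -
  have "freq_sum n {k\<in>J. k < m} < int (n m) \<and>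
      (\<forall>j. j \<noteq> m \<longrightarrow> freq_sum n {k\<in>J. k < m} < \<bar>int (n m) - int (n j)\<bar>)"
    using assms unfolding riesz_gap_def by (rule bspec)
  then show "freq_sum n {k\<in>J. k < m} < int (n m)"
    "\<And>j. j \<noteq> m \<Longrightarrow> freq_sum n {k\<in>J. k < m} < \<bar>int (n m) - int (n j)\<bar>"
    by simp_all
qed

lemma riesz_gap_insert_max:
  assumes gap: "riesz_gap n (insert b A)" and below: "\<forall>a\<in>A. a < b"
  shows "riesz_gap n A" "freq_sum n A < int (n b)"
    "\<And>j. j \<noteq> b \<Longrightarrow> freq_sum n A < \<bar>int (n b) - int (n j)\<bar>"
proof -
  show "riesz_gap n A"
    unfolding riesz_gap_def
  proof (intro ballI conjI allI impI)
    fix m j assume m: "m \<in> A"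
    then have "{k \<in> insert b A. k < m} = {k \<in> A. k < m}" using below by auto
    moreover have "m \<in> insert b A" using m by simp
    note riesz_gapD[OF gap this, unfolded calculation]
    then show "freq_sum n {k \<in> A. k < m} < int (n m)"
      and "j \<noteq> m \<Longrightarrow> freq_sum n {k \<in> A. k < m} < \<bar>int (n m) - int (n j)\<bar>" by simp_all
  qed
  have "{k \<in> insert b A. k < b} = A" using below by auto
  note riesz_gapD[OF gap insertI1, unfolded this]
  then show "freq_sum n A < int (n b)" "\<And>j. j \<noteq> b \<Longrightarrow> freq_sum n A < \<bar>int (n b) - int (n j)\<bar>"
    by simp_all
qed

(* The Fourier coefficient of the Riesz product at q, as predicted by expanding only the
   first-order terms: 1 at q = 0, conj(u_k)/2 at n_k and u_k/2 at -n_k. *)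
definition riesz_coeff :: "(nat \<Rightarrow> complex) \<Rightarrow> (nat \<Rightarrow> nat) \<Rightarrow> nat set \<Rightarrow> int \<Rightarrow> complex" where
  "riesz_coeff u n J q = (if q = 0 then 1 else 0) +
     (\<Sum>k\<in>J. (if q = int (n k) then cnj (u k) / 2 else 0) + (if q = - int (n k) then u k / 2 else 0))"

lemma riesz_coeff_zero:
  assumes "\<forall>k. n k > 0"
  shows "riesz_coeff u n J 0 = 1"
proof -
  have "(if (0::int) = int (n k) then cnj (u k) / 2 else 0) + (if (0::int) = - int (n k) then u k / 2 else 0) = 0" for k
    using assms[rule_format, of k] by auto
  then show ?thesis unfolding riesz_coeff_def by simp
qed

lemma riesz_coeff_freq:
  assumes "\<forall>k. n k > 0" "inj n" "finite J"
  shows "riesz_coeff u n J (int (n k)) = (if k \<in> J then cnj (u k) / 2 else 0)"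
proof -
  have "int (n k) \<noteq> - int (n j)" "(int (n k) = int (n j)) = (k = j)" for j
    using assms(1)[rule_format, of k] assms(2) by (auto simp: inj_eq)
  then have "riesz_coeff u n J (int (n k)) = (\<Sum>j\<in>J. if k = j then cnj (u j) / 2 else 0)"
    using assms(1)[rule_format, of k] unfolding riesz_coeff_def by simp
  then show ?thesis using assms(3) by simp
qed

lemma riesz_coeff_insert:
  assumes "finite A" "b \<notin> A"
  shows "riesz_coeff u n (insert b A) q = riesz_coeff u n A q
     + (if q = int (n b) then cnj (u b) / 2 else 0) + (if q = - int (n b) then u b / 2 else 0)"
  using assms unfolding riesz_coeff_def by (simp add: algebra_simps)

(* Arithmetic core of the coefficient computation: shifting an admissible frequency by
   +-n_b either cancels it or moves it outside the spectrum of the smaller product. *)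
lemma frequency_shift_gap:
  fixes T :: int
  assumes below: "T < int (n b)" and sep: "\<And>j. j \<noteq> b \<Longrightarrow> T < \<bar>int (n b) - int (n j)\<bar>"
    and q: "q = 0 \<or> (\<exists>j. q = int (n j) \<or> q = - int (n j))"
  shows "q + int (n b) = 0 \<or> T < \<bar>q + int (n b)\<bar>" "q - int (n b) = 0 \<or> T < \<bar>q - int (n b)\<bar>"
proof -
  have "(q + int (n b) = 0 \<or> T < \<bar>q + int (n b)\<bar>) \<and> (q - int (n b) = 0 \<or> T < \<bar>q - int (n b)\<bar>)"
    using q
  proof (elim disjE exE)
    fix j assume "q = int (n j)"
    with below sep[of j] show ?thesis by (cases "j = b") (auto simp: abs_minus_commute)
  next
    fix j assume "q = - int (n j)"
    with below sep[of j] show ?thesis by (cases "j = b") (auto simp: abs_minus_commute)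
  qed (use below in simp)
  then show "q + int (n b) = 0 \<or> T < \<bar>q + int (n b)\<bar>" "q - int (n b) = 0 \<or> T < \<bar>q - int (n b)\<bar>"
    by simp_all
qed

lemma root_mean_riesz_coeff:
  assumes "finite J" "riesz_gap n J" "0 < N" "\<forall>k. n k > 0"
    and "q = 0 \<or> (\<exists>j. q = int (n j) \<or> q = - int (n j))" "\<bar>q\<bar> + freq_sum n J < int N"
  shows "root_mean N (\<lambda>t. complex_of_real (riesz u n J t) * wave q t) = riesz_coeff u n J q"
  using assms(1,2,5,6)
proof (induction J arbitrary: q rule: finite_linorder_max_induct)
  case empty
  then show ?case using root_mean_wave[OF assms(3), of q] by (simp add: riesz_def freq_sum_def riesz_coeff_def)
next
  case (insert b A)
  have bA: "b \<notin> A" using insert.hyps by auto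
  have total: "freq_sum n (insert b A) = freq_sum n A + int (n b)"
    using insert.hyps bA by (simp add: freq_sum_def)
  note gap = riesz_gap_insert_max[OF insert.prems(1) insert.hyps(2)]
  have shifted: "root_mean N (\<lambda>t. complex_of_real (riesz u n A t) * wave r t) = (if r = 0 then 1 else 0)"
    if "r = 0 \<or> freq_sum n A < \<bar>r\<bar>" "\<bar>r\<bar> + freq_sum n A < int N" for r
  proof (cases "r = 0")
    case True
    then show ?thesis
      using insert.IH[OF gap(1), of 0] that riesz_coeff_zero[OF assms(4)] by simp
  next
    case False
    then show ?thesis using that root_mean_riesz_high[OF insert.hyps(1) assms(3)] by simp
  qed
  note up_down = frequency_shift_gap[OF gap(2,3) insert.prems(2)]
  have "root_mean N (\<lambda>t. complex_of_real (riesz u n A t) * wave q t) = riesz_coeff u n A q"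
    using insert.prems(2,3) total by (intro insert.IH gap(1)) auto
  moreover have "\<bar>q + int (n b)\<bar> + freq_sum n A < int N" "\<bar>q - int (n b)\<bar> + freq_sum n A < int N"
    using insert.prems(3) total by auto
  moreover have "(q + int (n b) = 0) = (q = - int (n b))" "(q - int (n b) = 0) = (q = int (n b))"
    by auto
  ultimately show ?case
    using shifted[OF up_down(1)] shifted[OF up_down(2)]
    unfolding root_mean_riesz_insert[OF insert.hyps(1) bA] riesz_coeff_insert[OF insert.hyps(1) bA]
    by simp
qed

lemma root_mean_riesz_one:
  assumes "finite J" "riesz_gap n J" "\<forall>k. n k > 0" "freq_sum n J < int N"
  shows "root_mean N (\<lambda>t. complex_of_real (riesz u n J t)) = 1"
proof -
  have "0 < N" using assms(4) freq_sum_nonneg[of n J] by linarith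
  from root_mean_riesz_coeff[OF assms(1,2) this assms(3), of 0 u] assms(4)
  show ?thesis by (simp add: riesz_coeff_zero[OF assms(3)] wave_def)
qed

lemma root_mean_riesz_freq:
  assumes "finite J" "riesz_gap n J" "\<forall>k. n k > 0" "inj n" "int (n k) + freq_sum n J < int N"
  shows "root_mean N (\<lambda>t. complex_of_real (riesz u n J t) * wave (int (n k)) t) =
    (if k \<in> J then cnj (u k) / 2 else 0)"
proof -
  have "0 < N" using assms(5) freq_sum_nonneg[of n J] by linarith
  moreover have "int (n k) = 0 \<or> (\<exists>j. int (n k) = int (n j) \<or> int (n k) = - int (n j))" by blast
  ultimately have "root_mean N (\<lambda>t. complex_of_real (riesz u n J t) * wave (int (n k)) t) =
      riesz_coeff u n J (int (n k))"
    using assms(5) by (intro root_mean_riesz_coeff[OF assms(1,2) _ assms(3)]) simp_all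
  then show ?thesis using riesz_coeff_freq[OF assms(3,4,1)] by simp
qed

lemma root_mean_times_series:
  fixes c :: "nat \<Rightarrow> complex"
  assumes sm: "summable (\<lambda>k. norm (c k))"
  shows "root_mean N (\<lambda>t. complex_of_real (R t) * (\<Sum>k. c k * cis (real (n k) * t))) =
    (\<Sum>k. c k * root_mean N (\<lambda>t. complex_of_real (R t) * wave (int (n k)) t))"
proof -
  have wave_sum: "summable (\<lambda>k. c k * cis (real (n k) * t))" for t
    by (rule summable_norm_cancel, rule summable_comparison_test'[OF sm, of 0]) (simp add: norm_mult)
  have wave_coeff: "root_mean N (\<lambda>t. complex_of_real (R t) * (c k * cis (real (n k) * t))) =
      c k * root_mean N (\<lambda>t. complex_of_real (R t) * wave (int (n k)) t)" for k
    unfolding wave_def root_mean_cmult[symmetric] by (simp add: mult.left_commute)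
  have "root_mean N (\<lambda>t. complex_of_real (R t) * (\<Sum>k. c k * cis (real (n k) * t)))
      = root_mean N (\<lambda>t. \<Sum>k. complex_of_real (R t) * (c k * cis (real (n k) * t)))"
    by (simp only: suminf_mult[OF wave_sum])
  also have "\<dots> = (\<Sum>k. c k * root_mean N (\<lambda>t. complex_of_real (R t) * wave (int (n k)) t))"
    using wave_sum by (simp add: root_mean_suminf summable_mult wave_coeff)
  finally show ?thesis .
qed

lemma mult_cnj_sgn: "c * cnj (sgn c) = complex_of_real (norm c)"
proof (cases "c = 0")
  case False
  have "c * cnj (sgn c) = c * cnj c / complex_of_real (norm c)"
    by (simp add: sgn_div_norm scaleR_conv_of_real divide_inverse mult_ac)
  also have "\<dots> = complex_of_real (norm c)"
    using False by (simp flip: complex_norm_square add: power2_eq_square)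
  finally show ?thesis .
qed simp

lemma suminf_mult_bounded:
  fixes c w :: "nat \<Rightarrow> complex"
  assumes c: "summable (\<lambda>k. norm (c k))" and w: "\<And>k. norm (w k) \<le> 1"
  shows "summable (\<lambda>k. norm (c k * w k))" "norm (\<Sum>k. c k * w k) \<le> (\<Sum>k. norm (c k))"
proof -
  have le: "norm (c k * w k) \<le> norm (c k)" for k
    using w[of k] by (simp add: norm_mult mult_left_le)
  show sm: "summable (\<lambda>k. norm (c k * w k))"
    using le by (intro summable_comparison_test'[OF c, of 0]) simp
  have "norm (\<Sum>k. c k * w k) \<le> (\<Sum>k. norm (c k * w k))" by (rule summable_norm[OF sm])
  also have "\<dots> \<le> (\<Sum>k. norm (c k))" by (rule suminf_le[OF le sm c])
  finally show "norm (\<Sum>k. c k * w k) \<le> (\<Sum>k. norm (c k))" .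
qed

(* Sidon's inequality up to the tail beyond K: test the bound on the real part against the Riesz
   product with phases sgn c_k; the first K coefficients give sum_J |c_k| / 2, the tail is small. *)
lemma sidon_truncated:
  fixes c :: "nat \<Rightarrow> complex"
  assumes sm: "summable (\<lambda>k. norm (c k))"
    and npos: "\<forall>k. n k > 0" and ninj: "inj n"
    and bound: "\<And>t. Re (\<Sum>k. c k * cis (real (n k) * t)) \<le> B"
    and J: "finite J" "riesz_gap n J" and JK: "J \<subseteq> {..<K}"
  shows "(\<Sum>k\<in>J. norm (c k)) \<le> 2 * B + 2 * (\<Sum>i. norm (c (i + K)))"
proof -
  define u where "u k = sgn (c k)" for k
  have u: "norm (u k) \<le> 1" for k by (simp add: u_def norm_sgn)
  define R where "R = riesz u n J"
  have R: "0 \<le> R t" for t unfolding R_def by (rule riesz_nonneg[OF u])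
  define S where "S = (\<Sum>k<K. n k)"
  define N where "N = Suc (nat (freq_sum n J) + S)"
  have N: "int N = freq_sum n J + int S + 1"
    using freq_sum_nonneg[of n J] by (simp add: N_def)
  have "n k \<le> S" if "k < K" for k
    unfolding S_def using that by (intro member_le_sum) auto
  then have fits: "int (n k) + freq_sum n J < int N" if "k < K" for k
    using that N by force
  have mean_R: "root_mean N (\<lambda>t. complex_of_real (R t)) = 1"
    unfolding R_def by (rule root_mean_riesz_one[OF J npos]) (simp add: N)
  define w where "w k = root_mean N (\<lambda>t. complex_of_real (R t) * wave (int (n k)) t)" for k
  have w_le: "norm (w k) \<le> 1" for k
    using root_mean_norm_le[of R N "int (n k)", OF R] mean_R by (simp add: w_def)
  have w_head: "w k = (if k \<in> J then cnj (u k) / 2 else 0)" if "k < K" for k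
    unfolding w_def R_def by (rule root_mean_riesz_freq[OF J npos ninj fits[OF that]])
  have sum_cw: "summable (\<lambda>k. c k * w k)"
    by (rule summable_norm_cancel[OF suminf_mult_bounded(1)[OF sm w_le]])
  have "Re (\<Sum>k. c k * w k) \<le> B"
    using root_mean_Re_le[of R "\<lambda>t. \<Sum>k. c k * cis (real (n k) * t)" B N, OF R bound] mean_R
    unfolding root_mean_times_series[OF sm] w_def by simp
  moreover have "(\<Sum>k. c k * w k) = (\<Sum>i. c (i + K) * w (i + K)) + (\<Sum>k<K. c k * w k)"
    by (rule suminf_split_initial_segment[OF sum_cw])
  moreover have "(\<Sum>k<K. c k * w k) = (\<Sum>k\<in>J. complex_of_real (norm (c k))) / 2"
  proof -
    have "(\<Sum>k<K. c k * w k) = (\<Sum>k\<in>{..<K} \<inter> J. c k * cnj (u k) / 2)"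
      unfolding sum.inter_restrict[OF finite_lessThan] by (intro sum.cong) (simp_all add: w_head)
    also have "{..<K} \<inter> J = J" using JK by blast
    finally show ?thesis by (simp add: u_def mult_cnj_sgn sum_divide_distrib)
  qed
  moreover have "- (\<Sum>i. norm (c (i + K))) \<le> Re (\<Sum>i. c (i + K) * w (i + K))"
    using suminf_mult_bounded[of "\<lambda>i. c (i + K)" "\<lambda>i. w (i + K)"]
      summable_ignore_initial_segment[OF sm, of K] w_le
      abs_Re_le_cmod[of "\<Sum>i. c (i + K) * w (i + K)"] by fastforce
  ultimately show ?thesis by simp
qed

lemma sidon:
  fixes c :: "nat \<Rightarrow> complex"
  assumes sm: "summable (\<lambda>k. norm (c k))"
    and npos: "\<forall>k. n k > 0" and ninj: "inj n"
    and bound: "\<And>t. Re (\<Sum>k. c k * cis (real (n k) * t)) \<le> B"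
    and J: "finite J" "riesz_gap n J"
  shows "(\<Sum>k\<in>J. norm (c k)) \<le> 2 * B"
proof (rule field_le_epsilon)
  fix e :: real assume "0 < e"
  then obtain K0 where K0: "\<And>K. K \<ge> K0 \<Longrightarrow> norm (\<Sum>i. norm (c (i + K))) < e / 2"
    using suminf_exist_split[OF _ sm, of "e / 2"] by auto
  define K where "K = max K0 (Suc (Max (insert 0 J)))"
  have "J \<subseteq> {..<K}"
    using J(1) by (auto simp: K_def less_max_iff_disj le_imp_less_Suc)
  from sidon_truncated[OF sm npos ninj bound J this] K0[of K]
  show "(\<Sum>k\<in>J. norm (c k)) \<le> 2 * B + e" by (simp add: K_def abs_less_iff)
qed

lemma lacunary_strict_mono:
  fixes n :: "nat \<Rightarrow> nat"
  assumes "lam > 1" "\<forall>k. n k > 0" "\<forall>k. real (n (Suc k)) \<ge> lam * real (n k)"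
  shows "strict_mono n"
proof (rule strict_mono_Suc_iff[THEN iffD2], rule allI)
  fix k
  have "real (n k) < lam * real (n k)" using assms(1,2) by simp
  also have "\<dots> \<le> real (n (Suc k))" using assms(3) by simp
  finally show "n k < n (Suc k)" by simp
qed

lemma lacunary_pow:
  fixes n :: "nat \<Rightarrow> nat"
  assumes "\<forall>k. real (n (Suc k)) \<ge> lam * real (n k)" "lam \<ge> 0"
  shows "real (n (k + i)) \<ge> lam ^ i * real (n k)"
proof (induction i)
  case (Suc i)
  have "lam ^ Suc i * real (n k) = lam * (lam ^ i * real (n k))" by simp
  also have "\<dots> \<le> lam * real (n (k + i))" using Suc assms(2) by (intro mult_left_mono)
  also have "\<dots> \<le> real (n (k + Suc i))" using assms(1) by simp
  finally show ?case .
qed simp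

lemma lacunary_separation:
  fixes n :: "nat \<Rightarrow> nat"
  assumes lam: "lam > 1" and npos: "\<forall>k. n k > 0"
    and ng: "\<forall>k. real (n (Suc k)) \<ge> lam * real (n k)" and jm: "j \<noteq> m"
  shows "\<bar>real (n m) - real (n j)\<bar> \<ge> (1 - 1 / lam) * real (n m)"
proof -
  have mono: "n a \<le> n b" if "a \<le> b" for a b
    using lacunary_strict_mono[OF lam npos ng] that by (simp add: strict_mono_less_eq)
  have "0 \<le> (lam - 1)^2 / lam" using lam by simp
  also have "\<dots> = (lam - 1) - (1 - 1 / lam)" using lam by (simp add: field_simps power2_eq_square)
  finally have ratio: "1 - 1 / lam \<le> lam - 1" by simp
  show ?thesis
  proof (cases "j < m")
    case True
    then obtain p where p: "m = Suc p" "j \<le> p" by (metis less_Suc_eq_le lessE)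
    have "lam * real (n j) \<le> lam * real (n p)" using mono[OF p(2)] lam by simp
    also have "\<dots> \<le> real (n m)" using ng p(1) by simp
    finally have "real (n j) \<le> real (n m) / lam" using lam by (simp add: field_simps)
    moreover have "real (n m) / lam \<le> real (n m)"
      using lam by (simp add: divide_le_eq mult_le_cancel_left1)
    moreover have "(1 - 1 / lam) * real (n m) = real (n m) - real (n m) / lam" by (simp add: algebra_simps)
    ultimately show ?thesis by simp
  next
    case False
    then have "Suc m \<le> j" using jm by simp
    then have "real (n (Suc m)) \<le> real (n j)" using mono by simp
    then have "lam * real (n m) \<le> real (n j)" using ng by (meson order_trans)
    moreover have "(1 - 1 / lam) * real (n m) \<le> (lam - 1) * real (n m)"
      using ratio by (simp add: mult_right_mono)
    ultimately show ?thesis by (simp add: algebra_simps abs_if)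
  qed
qed

lemma lacunary_partial_sum:
  fixes x :: "nat \<Rightarrow> real"
  assumes L: "L > 1" and x: "\<And>i. 0 \<le> x i" and step: "\<And>i. L * x i \<le> x (Suc i)"
  shows "(\<Sum>t<i. x t) \<le> x i / (L - 1)"
proof (induction i)
  case 0 then show ?case using L x by simp
next
  case (Suc i)
  have "(\<Sum>t<Suc i. x t) \<le> x i / (L - 1) + x i" using Suc by simp
  also have "\<dots> = L * x i / (L - 1)" using L by (simp add: field_simps)
  also have "\<dots> \<le> x (Suc i) / (L - 1)" using step[of i] L by (simp add: divide_right_mono)
  finally show ?case .
qed

(* If lam^m >= 1 + 2 lam/(lam - 1), the indices s, s + m, s + 2m, ... satisfy the separation
   condition: their frequencies grow by a factor so large that all smaller frequencies of the
   progression sum to less than half the separation (1 - 1/lam) n_m. *)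
lemma riesz_gap_progression:
  fixes n :: "nat \<Rightarrow> nat"
  assumes lam: "lam > 1" and npos: "\<forall>k. n k > 0" and ng: "\<forall>k. real (n (Suc k)) \<ge> lam * real (n k)"
    and m: "m > 0" and Lm: "lam ^ m \<ge> 1 + 2 * lam / (lam - 1)"
  shows "riesz_gap n ((\<lambda>i. s + m * i) ` {..<M})"
proof -
  define \<sigma> where "\<sigma> i = s + m * i" for i
  define L where "L = 1 + 2 * lam / (lam - 1)"
  have L: "L > 1" "real (n x) / (L - 1) = (1 - 1 / lam) * real (n x) / 2" for x
    using lam by (simp_all add: L_def field_simps)
  have step: "L * real (n (\<sigma> i)) \<le> real (n (\<sigma> (Suc i)))" for i
  proof -
    have "L * real (n (\<sigma> i)) \<le> lam ^ m * real (n (\<sigma> i))"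
      using Lm by (intro mult_right_mono) (auto simp: L_def)
    also have "\<dots> \<le> real (n (\<sigma> i + m))" by (rule lacunary_pow[OF ng]) (use lam in simp)
    finally show ?thesis by (simp add: \<sigma>_def algebra_simps)
  qed
  have below: "{k \<in> \<sigma> ` {..<M}. k < \<sigma> i} = \<sigma> ` {..<i}" if "i < M" for i
    using that m by (auto simp: \<sigma>_def)
  have "inj \<sigma>" using m by (auto simp: inj_def \<sigma>_def)
  then have sum_below: "real_of_int (freq_sum n (\<sigma> ` {..<i})) = (\<Sum>t<i. real (n (\<sigma> t)))" for i
    by (simp add: freq_sum_def sum.reindex inj_on_subset[of \<sigma> UNIV])
  show ?thesis
    unfolding riesz_gap_def \<sigma>_def[symmetric]
  proof (intro ballI conjI allI impI)
    fix x assume "x \<in> \<sigma> ` {..<M}"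
    then obtain i where i: "i < M" "x = \<sigma> i" by auto
    have "real_of_int (freq_sum n {k \<in> \<sigma> ` {..<M}. k < x}) \<le> real (n x) / (L - 1)"
      unfolding i(2) below[OF i(1)] sum_below
      using lacunary_partial_sum[of L "\<lambda>t. real (n (\<sigma> t))", OF L(1) _ step] by simp
    also have "\<dots> < (1 - 1 / lam) * real (n x)"
      using npos lam by (simp add: L(2) field_simps)
    finally have small: "real_of_int (freq_sum n {k \<in> \<sigma> ` {..<M}. k < x}) < (1 - 1 / lam) * real (n x)" .
    have "(1 - 1 / lam) * real (n x) \<le> real (n x)" using lam by (simp add: field_simps)
    with small show "freq_sum n {k \<in> \<sigma> ` {..<M}. k < x} < int (n x)" by linarith
    fix j assume "j \<noteq> x"
    from lacunary_separation[OF lam npos ng this] small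
    show "freq_sum n {k \<in> \<sigma> ` {..<M}. k < x} < \<bar>int (n x) - int (n j)\<bar>" by linarith
  qed
qed

lemma sum_le_residue_classes:
  fixes g :: "nat \<Rightarrow> real"
  assumes m: "m > 0" and g: "\<And>k. 0 \<le> g k"
    and X: "\<And>s. s < m \<Longrightarrow> (\<Sum>k\<in>(\<lambda>i. s + m * i) ` {..<M}. g k) \<le> X"
  shows "(\<Sum>k<M. g k) \<le> real m * X"
proof -
  have "(\<Sum>k<M. g k) = (\<Sum>s<m. \<Sum>k\<in>{k\<in>{..<M}. k mod m = s}. g k)"
    using m by (intro sum.group[symmetric]) auto
  also have "\<dots> \<le> (\<Sum>s<m. X)"
  proof (rule sum_mono)
    fix s assume s: "s \<in> {..<m}"
    have "{k\<in>{..<M}. k mod m = s} \<subseteq> (\<lambda>i. s + m * i) ` {..<M}"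
    proof
      fix k assume k: "k \<in> {k\<in>{..<M}. k mod m = s}"
      then have "k = s + m * (k div m)" "k div m < M"
        by (auto intro: le_less_trans[OF div_le_dividend])
      then show "k \<in> (\<lambda>i. s + m * i) ` {..<M}" by blast
    qed
    then have "(\<Sum>k\<in>{k\<in>{..<M}. k mod m = s}. g k) \<le> (\<Sum>k\<in>(\<lambda>i. s + m * i) ` {..<M}. g k)"
      using g by (intro sum_mono2) auto
    also have "\<dots> \<le> X" using X s by simp
    finally show "(\<Sum>k\<in>{k\<in>{..<M}. k mod m = s}. g k) \<le> X" .
  qed
  finally show ?thesis by simp
qed

lemma gap_series_abs_summable:
  fixes a :: "nat \<Rightarrow> complex" and n :: "nat \<Rightarrow> nat"
  assumes smo: "strict_mono n" and conv: "\<And>w. norm w < 1 \<Longrightarrow> summable (\<lambda>k. a k * w ^ n k)"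
    and z: "norm z < 1"
  shows "summable (\<lambda>k. norm (a k * z ^ n k))"
proof -
  define r where "r = (1 + norm z) / 2"
  define q where "q = norm z / r"
  have r: "0 < r" "r < 1" "norm z < r"
    using z by (simp_all add: r_def add_pos_nonneg)
  then have q: "0 \<le> q" "q < 1" by (auto simp: q_def)
  have "summable (\<lambda>k. a k * complex_of_real r ^ n k)" using conv r by simp
  then have "Bseq (\<lambda>k. a k * complex_of_real r ^ n k)"
    by (intro convergent_imp_Bseq convergentI[OF summable_LIMSEQ_zero])
  then obtain C where C: "C > 0" "\<And>k. norm (a k * complex_of_real r ^ n k) \<le> C"
    by (auto elim!: BseqE)
  have term_bound: "norm (a k * z ^ n k) \<le> C * q ^ k" for k
  proof -
    have "norm (a k * z ^ n k) = norm (a k * complex_of_real r ^ n k) * q ^ n k"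
      using r by (simp add: norm_mult norm_power q_def power_divide)
    also have "\<dots> \<le> C * q ^ n k" using C(2) q by (intro mult_right_mono) auto
    also have "\<dots> \<le> C * q ^ k" using C q seq_suble[OF smo, of k] by (intro mult_left_mono power_decreasing) auto
    finally show ?thesis .
  qed
  have "summable (\<lambda>k. C * q ^ k)" using q by (intro summable_mult summable_geometric) simp
  then show ?thesis
    by (rule summable_comparison_test'[where N = 0]) (simp add: term_bound)
qed

(* The estimate on one circle: rotating z by e^{it} turns f into a lacunary trigonometric
   series in t, to which Sidon's inequality applies on each residue class of indices. *)
lemma hadamard_circle_bound:
  fixes a :: "nat \<Rightarrow> complex" and n :: "nat \<Rightarrow> nat" and f :: "complex \<Rightarrow> complex"
  assumes lam: "lam > 1" and npos: "\<forall>k. n k > 0" and ng: "\<forall>k. real (n (Suc k)) \<ge> lam * real (n k)"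
    and m: "m > 0" and Lm: "lam ^ m \<ge> 1 + 2 * lam / (lam - 1)"
    and sums: "\<And>w. w \<in> ball 0 1 \<Longrightarrow> (\<lambda>k. a k * w ^ n k) sums f w"
    and upper: "\<And>w. w \<in> ball 0 1 \<Longrightarrow> Re (f w) \<le> h (norm w)"
    and z: "z \<in> ball 0 1"
  shows "norm (f z) \<le> 2 * real m * h (norm z)"
proof -
  define c where "c k = a k * z ^ n k" for k
  have smo: "strict_mono n" by (rule lacunary_strict_mono[OF lam npos ng])
  have "summable (\<lambda>k. a k * w ^ n k)" if "norm w < 1" for w
    using sums[of w] that by (simp add: sums_summable)
  then have abs_sum: "summable (\<lambda>k. norm (c k))"
    unfolding c_def using z by (intro gap_series_abs_summable[OF smo]) auto
  have rotated: "Re (\<Sum>k. c k * cis (real (n k) * t)) \<le> h (norm z)" for t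
  proof -
    define w where "w = z * cis t"
    have norm_w: "norm w = norm z" by (simp add: w_def norm_mult)
    then have w: "w \<in> ball 0 1" using z by simp
    have "(\<lambda>k. a k * w ^ n k) = (\<lambda>k. c k * cis (real (n k) * t))"
      by (simp add: w_def c_def power_mult_distrib Complex.DeMoivre mult.assoc)
    with sums[OF w] have "(\<Sum>k. c k * cis (real (n k) * t)) = f w"
      by (metis sums_unique)
    then show ?thesis using upper[OF w] norm_w by simp
  qed
  have "(\<Sum>k<M. norm (c k)) \<le> real m * (2 * h (norm z))" for M
  proof (rule sum_le_residue_classes[OF m])
    fix s assume "s < m"
    show "(\<Sum>k\<in>(\<lambda>i. s + m * i) ` {..<M}. norm (c k)) \<le> 2 * h (norm z)"
      by (rule sidon[OF abs_sum npos strict_mono_imp_inj_on[OF smo] rotated])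
         (auto intro: riesz_gap_progression[OF lam npos ng m Lm])
  qed simp
  then have "(\<Sum>k. norm (c k)) \<le> real m * (2 * h (norm z))"
    by (intro suminf_le_const[OF abs_sum])
  moreover have "f z = (\<Sum>k. c k)" using sums[OF z] by (simp add: c_def sums_unique)
  ultimately show ?thesis using summable_norm[OF abs_sum] by (simp add: algebra_simps)
qed

lemma hadamard_gap_estimate:
  fixes a :: "nat \<Rightarrow> complex" and n :: "nat \<Rightarrow> nat" and f :: "complex \<Rightarrow> complex"
  assumes lam: "lam > 1" and npos: "\<forall>k. n k > 0" and ng: "\<forall>k. real (n (Suc k)) \<ge> lam * real (n k)"
    and sums: "\<And>w. w \<in> ball 0 1 \<Longrightarrow> (\<lambda>k. a k * w ^ n k) sums f w"
    and upper: "\<And>w. w \<in> ball 0 1 \<Longrightarrow> Re (f w) \<le> h (norm w)"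
  obtains C :: real where "C > 0" "\<And>z. z \<in> ball 0 1 \<Longrightarrow> norm (f z) \<le> C * h (norm z)"
proof -
  obtain m where "1 + 2 * lam / (lam - 1) < lam ^ m" using real_arch_pow[OF lam] by blast
  also have "\<dots> \<le> lam ^ Suc m" using lam by simp
  finally have "lam ^ Suc m \<ge> 1 + 2 * lam / (lam - 1)" by simp
  from hadamard_circle_bound[OF lam npos ng _ this sums upper]
  show ?thesis by (intro that[of "2 * real (Suc m)"]) auto
qed

theorem corollary4:
  fixes v :: "real \<Rightarrow> real" and f :: "complex \<Rightarrow> complex"
    and a :: "nat \<Rightarrow> complex" and n :: "nat \<Rightarrow> nat" and lam :: real
  assumes "weight v" and "doubling v"
    and "lam > 1"
    and "\<forall>k. n k > 0"
    and "\<forall>k. real (n (Suc k)) \<ge> lam * real (n k)"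
    and "f holomorphic_on ball 0 1"
    and "\<forall>z\<in>ball 0 1. ((\<lambda>k. a k * z ^ n k) sums f z)"
    and "(\<lambda>z. Re (f z)) \<in> k_inf v"
  shows "(\<lambda>z. Re (f z)) \<in> h_inf v \<and> (\<lambda>z. Im (f z)) \<in> h_inf v"
proof -
  obtain K where K: "K > 0" "\<And>z. z \<in> ball 0 1 \<Longrightarrow> Re (f z) \<le> K * v (norm z)"
    using assms(8) unfolding k_inf_def by blast
  obtain C where C: "C > 0" "\<And>z. z \<in> ball 0 1 \<Longrightarrow> norm (f z) \<le> C * (K * v (norm z))"
    using hadamard_gap_estimate[OF assms(3-5) assms(7)[rule_format] K(2)] by blast
  have "\<bar>Re (f z)\<bar> \<le> (C * K) * v (norm z)" "\<bar>Im (f z)\<bar> \<le> (C * K) * v (norm z)"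
    if "z \<in> ball 0 1" for z
    using C(2)[OF that] abs_Re_le_cmod[of "f z"] abs_Im_le_cmod[of "f z"] by simp_all
  moreover have "C * K > 0" using C(1) K(1) by simp
  moreover have "harmonic_on (ball 0 1) (\<lambda>z. Re (f z))" "harmonic_on (ball 0 1) (\<lambda>z. Im (f z))"
    using assms(6) by (simp_all add: harmonic_on_Re_holomorphic harmonic_on_Im_holomorphic)
  ultimately show ?thesis unfolding h_inf_def by blast
qed

end
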